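(* Let $p$ be a prime and let $a,b$ be positive integers. Let $T_a,T_b$ be the Chebyshev polynomials of the first kind of degrees $a,b$, viewed as self-maps of $\mathbb{F}_p$. A point $z\in\mathbb{F}_p$ is periodic for $T_a\circ T_b$ if and only if it is periodic for both $T_a$ and $T_b$ (not necessarily of the same period).
   Context: The $d$-th Chebyshev polynomial of the first kind $T_d\in\mathbb{Z}[z]$ is the monic degree-$d$ polynomial with $T_d(z+z^{-1})=z^d+z^{-d}$; they satisfy $T_a\circ T_b=T_b\circ T_a=T_{ab}$. A point $z$ is periodic for a map $f$ if $f^n(z)=z$ for some $n\ge1$. *)

theory Defs
  imports "HOL-Computational_Algebra.Polynomial"
begin

text \<open>Chebyshev polynomials of the first kind (normalised so that
  T_d(z + 1/z) = z^d + z^(-d)): T_0 = 2, T_1 = X, T_(n+2) = X T_(n+1) - T_n.\<close>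
fun cheb :: "nat \<Rightarrow> int poly" where
  "cheb 0 = [:2:]"
| "cheb (Suc 0) = [:0, 1:]"
| "cheb (Suc (Suc n)) = [:0, 1:] * cheb (Suc n) - cheb n"

text \<open>The induced self-map of F_p, with F_p represented by {0..p-1}.\<close>
definition cheb_map :: "int \<Rightarrow> nat \<Rightarrow> int \<Rightarrow> int" where
  "cheb_map p d z = poly (cheb d) z mod p"

definition periodic_pt :: "('a \<Rightarrow> 'a) \<Rightarrow> 'a \<Rightarrow> bool" where
  "periodic_pt f z \<longleftrightarrow> (\<exists>n\<ge>1. (f ^^ n) z = z)"

end

theory Submission
  imports Defs
begin

text \<open>Since T_a \<circ> T_b = T_(ab) = T_b \<circ> T_a, the maps T_a and T_b commute on F_p.
  For commuting maps, a common multiple of a period of z under each of them is a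
  period under the composite. Conversely, if z = (T_a \<circ> T_b)^n z then
  z = T_a^(kn) (T_b^(kn) z) for every k; the finitely many values T_b^(kn) z must
  repeat, say at k = i < j, and then T_a^((j-i)n) z = z.\<close>

lemma cheb_mult:
  "n \<le> m \<Longrightarrow> cheb m * cheb n = cheb (m + n) + cheb (m - n)"
proof (induction n arbitrary: m rule: cheb.induct)
  case 1
  then show ?case by (simp add: numeral_mult_conv_smult)
next
  case 2
  then obtain k where "m = Suc k" by (cases m) auto
  then show ?case by (cases k) (simp_all add: algebra_simps)
next
  case (3 n)
  obtain k where k: "m - n = Suc (Suc k)" "m - Suc n = Suc k" "m - Suc (Suc n) = k"
    using "3.prems" by (intro that[of "m - Suc (Suc n)"]) auto
  have "cheb m * cheb (Suc (Suc n)) = [:0, 1:] * (cheb m * cheb (Suc n)) - cheb m * cheb n"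
    by (subst cheb.simps(3)) algebra
  also have "\<dots> = [:0, 1:] * (cheb (m + Suc n) + cheb (m - Suc n)) - (cheb (m + n) + cheb (m - n))"
    using "3.IH" "3.prems" by simp
  also have "cheb (m - n) = [:0, 1:] * cheb (m - Suc n) - cheb (m - Suc (Suc n))"
    by (simp only: k cheb.simps(3))
  also have "[:0, 1:] * (cheb (m + Suc n) + cheb (m - Suc n)) - (cheb (m + n) + \<dots>)
      = ([:0, 1:] * cheb (Suc (m + n)) - cheb (m + n)) + cheb (m - Suc (Suc n))"
    by (simp only: add_Suc_right) algebra
  finally show ?case by simp
qed

lemma pcompose_cheb: "pcompose (cheb k) (cheb b) = cheb (k * b)"
proof (induction k rule: cheb.induct)
  case (3 n)
  have "pcompose (cheb (Suc (Suc n))) (cheb b) = cheb (Suc n * b) * cheb b - cheb (n * b)"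
    using "3.IH" by (simp add: pcompose_diff pcompose_mult pcompose_pCons algebra_simps)
  also have "\<dots> = cheb (Suc (Suc n) * b)"
    using cheb_mult[of b "Suc n * b"] by (simp add: algebra_simps)
  finally show ?case .
qed (simp_all add: pcompose_pCons)

lemma poly_mod_cong: "poly q (x mod p) mod p = poly q x mod (p :: int)"
proof (induction q)
  case (pCons c q)
  have "(x mod p * poly q (x mod p)) mod p = (x * poly q x) mod p"
    by (rule mod_mult_cong) (simp_all add: pCons.IH)
  then have "(c + x mod p * poly q (x mod p)) mod p = (c + x * poly q x) mod p"
    by (rule mod_add_cong[OF refl])
  then show ?case by simp
qed simp

lemma cheb_map_comp: "cheb_map p a (cheb_map p b z) = cheb_map p (a * b) z"
  unfolding cheb_map_def
  by (simp add: poly_mod_cong flip: poly_pcompose pcompose_cheb)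

lemma cheb_map_commute: "cheb_map p a (cheb_map p b z) = cheb_map p b (cheb_map p a z)"
  by (simp add: cheb_map_comp mult.commute)

lemma funpow_mult_fixpoint: "(f ^^ n) z = z \<Longrightarrow> (f ^^ (n * k)) z = z"
proof -
  assume "(f ^^ n) z = z"
  then have "((f ^^ n) ^^ k) z = z" by (induction k) auto
  then show ?thesis by (simp add: funpow_mult)
qed

lemma funpow_commute:
  "(\<And>x. f (g x) = g (f x)) \<Longrightarrow> (f ^^ k) (g x) = g ((f ^^ k) x)"
  by (induction k) auto

lemma funpow_comp_commute:
  assumes "\<And>x. f (g x) = g (f x)"
  shows "((f \<circ> g) ^^ k) x = (f ^^ k) ((g ^^ k) x)"
  by (induction k arbitrary: x)
    (simp_all add: funpow_swap1 flip: funpow_commute[of f g, OF assms])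

lemma periodic_pt_comp:
  assumes "\<And>x. f (g x) = g (f x)" and "periodic_pt f z" and "periodic_pt g z"
  shows "periodic_pt (f \<circ> g) z"
proof -
  obtain m where m: "m \<ge> 1" "(f ^^ m) z = z" using assms(2) unfolding periodic_pt_def by blast
  obtain n where n: "n \<ge> 1" "(g ^^ n) z = z" using assms(3) unfolding periodic_pt_def by blast
  have "((f \<circ> g) ^^ (m * n)) z = z"
    using funpow_mult_fixpoint[OF m(2), of n] funpow_mult_fixpoint[OF n(2), of m]
    by (simp add: funpow_comp_commute[of f g, OF assms(1)] mult.commute)
  moreover have "m * n \<ge> 1" using m n by simp
  ultimately show ?thesis unfolding periodic_pt_def by blast
qed

lemma periodic_pt_comp_left:
  assumes comm: "\<And>x. f (g x) = g (f x)" and "finite S" and "g ` S \<subseteq> S" and "z \<in> S"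
    and "periodic_pt (f \<circ> g) z"
  shows "periodic_pt f z"
proof -
  obtain n where n: "n \<ge> 1" "((f \<circ> g) ^^ n) z = z"
    using assms(5) unfolding periodic_pt_def by blast
  define h where "h k = (g ^^ (n * k)) z" for k
  have returns: "(f ^^ (n * k)) (h k) = z" for k
    using funpow_mult_fixpoint[OF n(2), of k] by (simp add: h_def funpow_comp_commute[of f g, OF comm])
  have "(g ^^ k) z \<in> S" for k
    by (induction k) (use assms(3,4) in auto)
  then have "range h \<subseteq> S" by (auto simp: h_def)
  then have "\<not> inj h"
    using \<open>finite S\<close> finite_imageD infinite_UNIV_nat rev_finite_subset by blast
  then obtain i j where ij: "i < j" "h i = h j"
    unfolding inj_def by (metis linorder_neq_iff)
  have "(f ^^ (n * (j - i))) z = (f ^^ (n * (j - i) + n * i)) (h i)"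
    by (simp add: funpow_add returns)
  also have "\<dots> = z"
    using ij returns[of j] by (simp flip: add_mult_distrib2)
  finally have "(f ^^ (n * (j - i))) z = z" .
  moreover have "n * (j - i) \<ge> 1" using n ij by simp
  ultimately show ?thesis unfolding periodic_pt_def by blast
qed

theorem mainTheorem4:
  fixes p :: int and a b :: nat and z :: int
  assumes "prime p" and "a \<ge> 1" and "b \<ge> 1" and "0 \<le> z" and "z < p"
  shows "periodic_pt (cheb_map p a \<circ> cheb_map p b) z \<longleftrightarrow>
         periodic_pt (cheb_map p a) z \<and> periodic_pt (cheb_map p b) z"
proof -
  have "p > 0" using \<open>prime p\<close> prime_gt_0_int by blast
  then have maps_into: "cheb_map p d ` {0..<p} \<subseteq> {0..<p}" for d
    by (auto simp: cheb_map_def)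
  have z: "z \<in> {0..<p}" using assms by simp
  have comm: "cheb_map p a (cheb_map p b x) = cheb_map p b (cheb_map p a x)" for x
    by (rule cheb_map_commute)
  then have "cheb_map p b \<circ> cheb_map p a = cheb_map p a \<circ> cheb_map p b"
    by (simp add: fun_eq_iff)
  then show ?thesis
    using periodic_pt_comp_left[of "cheb_map p a" "cheb_map p b", OF comm _ maps_into z]
      periodic_pt_comp_left[of "cheb_map p b" "cheb_map p a", OF comm[symmetric] _ maps_into z]
      periodic_pt_comp[of "cheb_map p a" "cheb_map p b", OF comm]
    by auto
qed

end
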